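(* Assume the standing setting described in the context. Then $\mathcal{G}(t)\lesssim1$ and $\|\rho(t)\|_\infty\lesssim(t+\alpha)^{-d}$.
   Context: Standing setting: $d\ge4$, $\alpha>0$, $f_0\in C^1_0(\mathbb{R}^{2d})$ nonnegative with $\langle x-\alpha v\rangle^pf_0\in W^{1,\infty}(\mathbb{R}^{2d})$ for some $p>d+1$, where $\langle u\rangle=\sqrt{1+|u|^2}$. $f$ is the classical solution on $[0,\infty)$ of the Vlasov–Poisson system $\partial_tf+v\cdot\nabla_xf+E\cdot\nabla_vf=0$, $\rho=\int f\,dv$, $E(t,x)=\frac{1}{d\omega_d}\int\frac{x-y}{|x-y|^d}\rho(t,y)\,dy$ ($\omega_d$ the volume of the unit ball), with $f(0)=f_0$. With $M_k(t)=\iint|x-v(t+\alpha)|^kf\,dv\,dx$, it is assumed that $\|E(t)\|_\infty\lesssim(t+\alpha)^{1-d}$ and $M_k(t)\lesssim1$ for all $0\le k\le n$, for some $n>d(d-1)$. Here $A\lesssim B$ means $A(t)\le CB(t)$ for all $t\ge0$ with $C$ independent of $t$. Define $g(t,x,v)=f(t,x+v(t+\alpha),v)$ and $\mathcal{G}(t)=1+\sup_{x,v}\langle x\rangle^pg(t,x,v)$. *)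

theory Defs
  imports "HOL-Analysis.Analysis"
begin

definition jbr :: "'a::real_normed_vector \<Rightarrow> real" where
  "jbr u = sqrt (1 + (norm u)^2)"

definition C1_on :: "'a::real_normed_vector set \<Rightarrow> ('a \<Rightarrow> 'b::real_normed_vector) \<Rightarrow> bool" where
  "C1_on S h \<longleftrightarrow> (\<exists>Dh :: 'a \<Rightarrow> ('a \<Rightarrow>\<^sub>L 'b).
      (\<forall>z\<in>S. (h has_derivative blinfun_apply (Dh z)) (at z within S)) \<and> continuous_on S Dh)"

definition C1_0 :: "('a::euclidean_space \<Rightarrow> real) \<Rightarrow> bool" where
  "C1_0 h \<longleftrightarrow> C1_on UNIV h \<and> compact (closure {z. h z \<noteq> 0})"

definition W1inf :: "('a::euclidean_space \<Rightarrow> real) \<Rightarrow> bool" where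
  "W1inf h \<longleftrightarrow> bounded (range h) \<and> (\<exists>L. L-lipschitz_on UNIV h)"

definition omega :: "'d::finite itself \<Rightarrow> real" where
  "omega _ = measure lborel (ball (0::real^'d) 1)"

definition rho :: "(real \<Rightarrow> real^'d \<Rightarrow> real^'d \<Rightarrow> real) \<Rightarrow> real \<Rightarrow> real^'d \<Rightarrow> real" where
  "rho f t x = (LINT v|lborel. f t x v)"

definition Efield :: "(real \<Rightarrow> real^'d \<Rightarrow> real^'d \<Rightarrow> real) \<Rightarrow> real \<Rightarrow> real^'d \<Rightarrow> real^'d" where
  "Efield f t x = (1 / (real CARD('d) * omega TYPE('d))) *\<^sub>R
      (LINT y|lborel. (rho f t y / norm (x - y) ^ CARD('d)) *\<^sub>R (x - y))"

definition classical_solution ::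
  "(real \<Rightarrow> real^'d \<Rightarrow> real^'d \<Rightarrow> real) \<Rightarrow> (real^'d \<Rightarrow> real^'d \<Rightarrow> real) \<Rightarrow> bool" where
  "classical_solution f f0 \<longleftrightarrow>
     (\<exists>Df :: real \<times> ((real^'d) \<times> (real^'d)) \<Rightarrow> ((real \<times> ((real^'d) \<times> (real^'d))) \<Rightarrow>\<^sub>L real).
        (\<forall>z\<in>{0..} \<times> UNIV. ((\<lambda>(t,x,v). f t x v) has_derivative blinfun_apply (Df z))
                                (at z within ({0..} \<times> UNIV))) \<and>
        continuous_on ({0..} \<times> UNIV) Df \<and>
        (\<forall>t\<ge>0. \<forall>x v. blinfun_apply (Df (t,x,v)) (1, v, Efield f t x) = 0)) \<and>
     (\<forall>t\<ge>0. \<forall>x. integrable lborel (\<lambda>v. f t x v)) \<and>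
     (\<forall>t\<ge>0. \<forall>x. integrable lborel (\<lambda>y. (rho f t y / norm (x - y) ^ CARD('d)) *\<^sub>R (x - y))) \<and>
     (\<forall>x v. f 0 x v = f0 x v)"

definition Mom :: "(real \<Rightarrow> real^'d \<Rightarrow> real^'d \<Rightarrow> real) \<Rightarrow> real \<Rightarrow> nat \<Rightarrow> real \<Rightarrow> real" where
  "Mom f \<alpha> k t = (LINT x|lborel. LINT v|lborel. norm (x - (t + \<alpha>) *\<^sub>R v) ^ k * f t x v)"

definition gfun :: "(real \<Rightarrow> real^'d \<Rightarrow> real^'d \<Rightarrow> real) \<Rightarrow> real \<Rightarrow> real \<Rightarrow> real^'d \<Rightarrow> real^'d \<Rightarrow> real" where
  "gfun f \<alpha> t x v = f t (x + (t + \<alpha>) *\<^sub>R v) v"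

definition Gweight :: "(real \<Rightarrow> real^'d \<Rightarrow> real^'d \<Rightarrow> real) \<Rightarrow> real \<Rightarrow> real \<Rightarrow> real \<Rightarrow> real set" where
  "Gweight f \<alpha> p t = (\<lambda>(x,v). jbr x powr p * gfun f \<alpha> t x v) ` UNIV"

definition Gcal :: "(real \<Rightarrow> real^'d \<Rightarrow> real^'d \<Rightarrow> real) \<Rightarrow> real \<Rightarrow> real \<Rightarrow> real \<Rightarrow> real" where
  "Gcal f \<alpha> p t = 1 + Sup (Gweight f \<alpha> p t)"

end

theory Submission
  imports Defs
begin

text \<open>Along characteristics \<open>f\<close> is constant, while \<open>x - (t + \<alpha>) v\<close> moves only through the
  field, with speed \<open>(t + \<alpha>) |E| = O((t + \<alpha>)\<^sup>2\<^sup>-\<^sup>d)\<close>, which is integrable in time for \<open>d \<ge> 4\<close>.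
  Hence \<open>|f| \<langle>x - (t + \<alpha>) v\<rangle>\<^sup>p exp (K (t + \<alpha>)\<^sup>3\<^sup>-\<^sup>d)\<close> is bounded by its initial values: this is a
  maximum principle on compact sets that backward characteristics cannot leave, and it gives the
  bound on \<open>\<G>\<close>. Then \<open>|\<rho>(t, x)| \<le> A \<integral> \<langle>x - (t + \<alpha>) v\<rangle>\<^sup>-\<^sup>p dv = A (t + \<alpha>)\<^sup>-\<^sup>d \<integral> \<langle>u\<rangle>\<^sup>-\<^sup>p du\<close>,
  and the last integral is finite because \<open>p > d\<close>.\<close>

lemma has_real_derivative_along_backward_line:
  fixes u :: "'a::real_normed_vector \<Rightarrow> real"
  assumes "(u has_derivative u') (at z)"
  shows "((\<lambda>s. u (z - s *\<^sub>R W)) has_real_derivative - u' W) (at 0)"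
proof -
  have "((\<lambda>s::real. z - s *\<^sub>R W) has_derivative (\<lambda>s. - (s *\<^sub>R W))) (at 0)"
    by (auto intro!: derivative_eq_intros)
  from has_derivative_compose[OF this, of u u'] assms
  have "((\<lambda>s. u (z - s *\<^sub>R W)) has_derivative (\<lambda>s. u' (- (s *\<^sub>R W)))) (at 0)"
    by simp
  moreover have "(\<lambda>s. u' (- (s *\<^sub>R W))) = (*) (- u' W)"
    using has_derivative_linear[OF assms] by (auto simp: linear_cmul linear_neg)
  ultimately show ?thesis
    unfolding has_field_derivative_def by simp
qed

lemma directional_derivative_nonneg_at_constrained_max:
  fixes u h :: "'a::real_normed_vector \<Rightarrow> real"
  assumes du: "(u has_derivative u') (at z)" and dh: "(h has_derivative h') (at z)"
    and hz: "h z \<le> 0" and hW: "h' W > 0" and \<epsilon>: "\<epsilon> > 0"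
    and max: "\<And>s. 0 < s \<Longrightarrow> s < \<epsilon> \<Longrightarrow> h (z - s *\<^sub>R W) \<le> 0 \<Longrightarrow> u (z - s *\<^sub>R W) \<le> u z"
  shows "u' W \<ge> 0"
proof (rule ccontr)
  assume "\<not> u' W \<ge> 0"
  then have "- u' W > 0" by simp
  from DERIV_pos_inc_right[OF has_real_derivative_along_backward_line[OF du] this]
  obtain d1 where "d1 > 0" and u_incr: "\<And>s. 0 < s \<Longrightarrow> s < d1 \<Longrightarrow> u z < u (z - s *\<^sub>R W)"
    by auto
  from DERIV_neg_dec_right[OF has_real_derivative_along_backward_line[OF dh]] hW
  obtain d2 where "d2 > 0" and h_decr: "\<And>s. 0 < s \<Longrightarrow> s < d2 \<Longrightarrow> h (z - s *\<^sub>R W) < h z"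
    by auto
  define s where "s = min (min d1 d2) \<epsilon> / 2"
  have s: "0 < s" "s < d1" "s < d2" "s < \<epsilon>"
    using \<open>d1 > 0\<close> \<open>d2 > 0\<close> \<epsilon> by (auto simp: s_def)
  have "h (z - s *\<^sub>R W) \<le> 0"
    using h_decr[OF s(1,3)] hz by simp
  with max s have "u (z - s *\<^sub>R W) \<le> u z" by blast
  with u_incr[OF s(1,2)] show False by simp
qed

lemma transported_nonpos_at_constrained_max:
  fixes F P h :: "'a::real_normed_vector \<Rightarrow> real"
  assumes dF: "(F has_derivative F') (at z)" and F'W: "F' W = 0"
    and dP: "(P has_derivative P') (at z)" and P'W: "P' W < 0"
    and dh: "(h has_derivative h') (at z)" and hz: "h z \<le> 0" and h'W: "h' W > 0"
    and \<epsilon>: "\<epsilon> > 0"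
    and max: "\<And>s. 0 < s \<Longrightarrow> s < \<epsilon> \<Longrightarrow> h (z - s *\<^sub>R W) \<le> 0 \<Longrightarrow>
                F (z - s *\<^sub>R W) * P (z - s *\<^sub>R W) \<le> F z * P z"
  shows "F z \<le> 0"
proof -
  have "0 \<le> F z * P' W + F' W * P z"
    by (rule directional_derivative_nonneg_at_constrained_max
        [OF has_derivative_mult[OF dF dP] dh hz h'W \<epsilon> max])
  then have "0 \<le> F z * P' W"
    using F'W by simp
  then show ?thesis
    using P'W mult_pos_neg[of "F z" "P' W"] by linarith
qed

lemma flow_energy_growth:
  fixes w V :: "'a::real_inner"
  assumes V: "norm V \<le> B * (1 + norm w)"
  shows "0 < 2 * (w \<bullet> V) + (3 * \<bar>B\<bar> + 1) * (1 + w \<bullet> w)"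
proof -
  define x where "x = norm w"
  define b where "b = \<bar>B\<bar>"
  have x: "0 \<le> x" and b: "0 \<le> b" and ww: "w \<bullet> w = x\<^sup>2"
    by (simp_all add: x_def b_def power2_norm_eq_inner)
  have "B * (1 + x) \<le> b * (1 + x)"
    using x by (intro mult_right_mono) (auto simp: b_def)
  with V have "norm V \<le> b * (1 + x)"
    unfolding x_def by linarith
  then have "norm w * norm V \<le> x * (b * (1 + x))"
    unfolding x_def by (metis mult_left_mono norm_ge_zero)
  with Cauchy_Schwarz_ineq2[of w V] have "\<bar>w \<bullet> V\<bar> \<le> x * (b * (1 + x))"
    by linarith
  also have "\<dots> = b * x + b * x\<^sup>2"
    by (simp add: algebra_simps power2_eq_square)
  finally have "\<bar>w \<bullet> V\<bar> \<le> b * x + b * x\<^sup>2" .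
  moreover have "2 * (b * x) \<le> b + b * x\<^sup>2"
    using mult_left_mono[OF sum_squares_bound[of x 1] b] by (simp add: algebra_simps)
  moreover have "0 \<le> b * x\<^sup>2"
    using b by simp
  ultimately have "2 * \<bar>w \<bullet> V\<bar> \<le> 3 * b + 3 * (b * x\<^sup>2)"
    using b by linarith
  moreover have "(3 * b + 1) * (1 + x\<^sup>2) = 3 * b + 3 * (b * x\<^sup>2) + (1 + x\<^sup>2)"
    by (simp add: algebra_simps)
  ultimately show ?thesis
    unfolding ww b_def[symmetric]
    using abs_ge_minus_self[of "w \<bullet> V"] zero_le_power2[of x] by linarith
qed

lemma flow_energy_has_derivative:
  fixes c R :: real
  shows "((\<lambda>z::real \<times> 'b::real_inner. (1 + snd z \<bullet> snd z) * exp (c * fst z) - R) has_derivative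
           (\<lambda>dz. (2 * (snd z \<bullet> snd dz) + c * fst dz * (1 + snd z \<bullet> snd z)) * exp (c * fst z))) (at z)"
  by (auto intro!: derivative_eq_intros simp: algebra_simps inner_commute)

lemma transported_nonpos_at_flow_max:
  fixes F P :: "real \<times> 'b::real_inner \<Rightarrow> real"
  assumes dF: "(F has_derivative F') (at (t, w))" and F'V: "F' (1, V) = 0"
    and dP: "(P has_derivative P') (at (t, w))" and P'V: "P' (1, V) < 0"
    and V: "norm V \<le> B * (1 + norm w)" and t: "0 < t"
    and energy: "(1 + w \<bullet> w) * exp ((3 * \<bar>B\<bar> + 1) * t) \<le> R"
    and max: "\<And>s. 0 < s \<Longrightarrow> s < t \<Longrightarrow>
      (1 + (w - s *\<^sub>R V) \<bullet> (w - s *\<^sub>R V)) * exp ((3 * \<bar>B\<bar> + 1) * (t - s)) \<le> R \<Longrightarrow>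
      F (t - s, w - s *\<^sub>R V) * P (t - s, w - s *\<^sub>R V) \<le> F (t, w) * P (t, w)"
  shows "F (t, w) \<le> 0"
proof -
  define c where "c = 3 * \<bar>B\<bar> + 1"
  define h where "h = (\<lambda>z::real \<times> 'b. (1 + snd z \<bullet> snd z) * exp (c * fst z) - R)"
  have h_growth: "0 < (\<lambda>dz. (2 * (snd (t, w) \<bullet> snd dz) + c * fst dz * (1 + snd (t, w) \<bullet> snd (t, w)))
                         * exp (c * fst (t, w))) (1, V)"
    using flow_energy_growth[OF V] by (simp add: c_def)
  have "h (t, w) \<le> 0"
    using energy by (simp add: h_def c_def)
  moreover have "F ((t, w) - s *\<^sub>R (1, V)) * P ((t, w) - s *\<^sub>R (1, V)) \<le> F (t, w) * P (t, w)"
    if "0 < s" "s < t" "h ((t, w) - s *\<^sub>R (1, V)) \<le> 0" for s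
    using max[OF that(1,2)] that(3) by (simp add: h_def c_def)
  ultimately show ?thesis
    using transported_nonpos_at_constrained_max
      [OF dF F'V dP P'V flow_energy_has_derivative[of c R "(t, w)", folded h_def] _ h_growth t]
    by blast
qed

text \<open>Backward characteristics from \<open>(t, w)\<close> cannot leave the compact sublevel set
  \<open>(1 + |w'|\<^sup>2) exp (c t') \<le> (1 + |w|\<^sup>2) exp (c t)\<close>, because this energy increases along
  the flow; the maximum of \<open>F \<cdot> P\<close> over that set is therefore attained
  at time \<open>0\<close> or at a point where \<open>F \<le> 0\<close>.\<close>
lemma transport_maximum_principle:
  fixes F P :: "real \<times> 'b::euclidean_space \<Rightarrow> real" and V :: "real \<Rightarrow> 'b \<Rightarrow> 'b"
  assumes F_cont: "continuous_on ({0..} \<times> UNIV) F"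
    and F_transported: "\<And>t w. 0 < t \<Longrightarrow> \<exists>F'. (F has_derivative F') (at (t, w)) \<and> F' (1, V t w) = 0"
    and P_cont: "continuous_on ({0..} \<times> UNIV) P"
    and P_nonneg: "\<And>t w. 0 \<le> t \<Longrightarrow> 0 \<le> P (t, w)"
    and P_decreasing: "\<And>t w. 0 < t \<Longrightarrow> \<exists>P'. (P has_derivative P') (at (t, w)) \<and> P' (1, V t w) < 0"
    and V_growth: "\<And>t w. 0 < t \<Longrightarrow> norm (V t w) \<le> B * (1 + norm w)"
    and M: "0 \<le> M" and initial: "\<And>w. F (0, w) * P (0, w) \<le> M"
    and t: "0 \<le> t"
  shows "F (t, w) * P (t, w) \<le> M"
proof -
  define c where "c = 3 * \<bar>B\<bar> + 1"
  define R where "R = (1 + w \<bullet> w) * exp (c * t)"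
  define D :: "(real \<times> 'b) set"
    where "D = ({0..t} \<times> cball 0 (sqrt R)) \<inter> {z. (1 + snd z \<bullet> snd z) * exp (c * fst z) \<le> R}"
  define u where "u = (\<lambda>z. F z * P z)"
  have in_cball: "norm y \<le> sqrt R" if "0 \<le> s" "(1 + y \<bullet> y) * exp (c * s) \<le> R" for s y
  proof -
    have "1 + y \<bullet> y \<le> (1 + y \<bullet> y) * exp (c * s)"
      using that(1) mult_left_mono[of 1 "exp (c * s)" "1 + y \<bullet> y"] by (simp add: c_def)
    with that(2) show ?thesis
      by (simp add: norm_eq_sqrt_inner)
  qed
  have "compact D"
    unfolding D_def
    by (intro compact_Int_closed compact_Times compact_Icc compact_cball closed_Collect_le
        continuous_intros)
  moreover have "continuous_on D u"
    unfolding u_def D_def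
    by (intro continuous_on_mult continuous_on_subset[OF F_cont] continuous_on_subset[OF P_cont]) auto
  moreover have tw_in_D: "(t, w) \<in> D"
    using in_cball[of t w] t by (simp add: D_def R_def)
  ultimately obtain ts ws where zs_in_D: "(ts, ws) \<in> D" and zs_max: "\<And>z. z \<in> D \<Longrightarrow> u z \<le> u (ts, ws)"
    using continuous_attains_sup[of D u] by (metis empty_iff surj_pair)
  have "u (ts, ws) \<le> M"
  proof (cases "ts = 0")
    case True
    then show ?thesis
      using initial by (simp add: u_def)
  next
    case False
    with zs_in_D have ts: "0 < ts" "ts \<le> t"
      by (auto simp: D_def)
    obtain F' where F': "(F has_derivative F') (at (ts, ws))" "F' (1, V ts ws) = 0"
      using F_transported[OF ts(1)] by blast
    obtain P' where P': "(P has_derivative P') (at (ts, ws))" "P' (1, V ts ws) < 0"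
      using P_decreasing[OF ts(1)] by blast
    have "(1 + ws \<bullet> ws) * exp (c * ts) \<le> R"
      using zs_in_D by (simp add: D_def)
    moreover have "u (ts - s, ws - s *\<^sub>R V ts ws) \<le> u (ts, ws)"
      if "0 < s" "s < ts"
        and "(1 + (ws - s *\<^sub>R V ts ws) \<bullet> (ws - s *\<^sub>R V ts ws)) * exp (c * (ts - s)) \<le> R" for s
      using that ts in_cball[OF _ that(3)] by (intro zs_max) (simp add: D_def)
    ultimately have "F (ts, ws) \<le> 0"
      using transported_nonpos_at_flow_max[OF F' P' V_growth[OF ts(1)] ts(1)]
      unfolding u_def c_def by blast
    then show ?thesis
      using mult_nonpos_nonneg[OF _ P_nonneg[of ts ws]] ts M unfolding u_def by fastforce
  qed
  then show ?thesis
    using zs_max[OF tw_in_D] by (simp add: u_def)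
qed

corollary transport_maximum_principle_abs:
  fixes F P :: "real \<times> 'b::euclidean_space \<Rightarrow> real" and V :: "real \<Rightarrow> 'b \<Rightarrow> 'b"
  assumes F_cont: "continuous_on ({0..} \<times> UNIV) F"
    and F_transported: "\<And>t w. 0 < t \<Longrightarrow> \<exists>F'. (F has_derivative F') (at (t, w)) \<and> F' (1, V t w) = 0"
    and P_cont: "continuous_on ({0..} \<times> UNIV) P"
    and P_nonneg: "\<And>t w. 0 \<le> t \<Longrightarrow> 0 \<le> P (t, w)"
    and P_decreasing: "\<And>t w. 0 < t \<Longrightarrow> \<exists>P'. (P has_derivative P') (at (t, w)) \<and> P' (1, V t w) < 0"
    and V_growth: "\<And>t w. 0 < t \<Longrightarrow> norm (V t w) \<le> B * (1 + norm w)"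
    and initial: "\<And>w. \<bar>F (0, w)\<bar> * P (0, w) \<le> M"
    and t: "0 \<le> t"
  shows "\<bar>F (t, w)\<bar> * P (t, w) \<le> M"
proof -
  have P0: "0 \<le> P (0, y)" for y
    using P_nonneg by simp
  have M: "0 \<le> M"
    using mult_nonneg_nonneg[OF abs_ge_zero P0, of "F (0, w)" w] initial[of w] by linarith
  have "F (t, w) * P (t, w) \<le> M"
  proof (rule transport_maximum_principle
      [OF F_cont F_transported P_cont P_nonneg P_decreasing V_growth M _ t])
    show "F (0, y) * P (0, y) \<le> M" for y
      using mult_right_mono[OF abs_ge_self P0, of "F (0, y)" y] initial[of y] by linarith
  qed
  moreover have "- F (t, w) * P (t, w) \<le> M"
  proof (rule transport_maximum_principle[OF _ _ P_cont P_nonneg P_decreasing V_growth M _ t])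
    show "continuous_on ({0..} \<times> UNIV) (\<lambda>z. - F z)"
      by (rule continuous_on_minus[OF F_cont])
    show "\<exists>G'. ((\<lambda>z. - F z) has_derivative G') (at (s, y)) \<and> G' (1, V s y) = 0" if s: "0 < s" for s y
    proof -
      obtain F' where "(F has_derivative F') (at (s, y))" "F' (1, V s y) = 0"
        using F_transported[OF s] by blast
      then show ?thesis
        by (intro exI[of _ "\<lambda>h. - F' h"] conjI has_derivative_minus) simp_all
    qed
    show "- F (0, y) * P (0, y) \<le> M" for y
      using mult_right_mono[OF abs_ge_minus_self P0, of "F (0, y)" y] initial[of y] by linarith
  qed
  ultimately show ?thesis
    by (simp add: abs_if)
qed

lemma jbr_powr: "jbr (y::'a::real_inner) powr p = (1 + y \<bullet> y) powr (p / 2)"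
proof -
  have "jbr y = (1 + y \<bullet> y) powr (1 / 2)"
    unfolding jbr_def by (simp add: powr_half_sqrt add_nonneg_nonneg power2_norm_eq_inner)
  then show ?thesis
    by (simp add: powr_powr)
qed

text \<open>The free-streaming weight \<open>\<langle>x - (t + \<alpha>) v\<rangle>\<^sup>p\<close> is transported exactly by the free flow;
  the factor \<open>exp (K (t + \<alpha>)\<^sup>-\<^sup>k)\<close> decreases fast enough in time to absorb the
  contribution of a field decaying like \<open>(t + \<alpha>)\<^sup>-\<^sup>k\<^sup>-\<^sup>2\<close>.\<close>
definition streaming_weight :: "real \<Rightarrow> real \<Rightarrow> real \<Rightarrow> real \<Rightarrow> real \<times> 'a::real_normed_vector \<times> 'a \<Rightarrow> real"
  where "streaming_weight \<alpha> p K k z =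
    jbr (fst (snd z) - (fst z + \<alpha>) *\<^sub>R snd (snd z)) powr p * exp (K * (fst z + \<alpha>) powr (-k))"

lemma streaming_weight_has_derivative:
  fixes z :: "real \<times> 'a::real_inner \<times> 'a"
  assumes T_pos: "0 < fst z + \<alpha>"
  defines "T \<equiv> fst z + \<alpha>" and "y \<equiv> fst (snd z) - (fst z + \<alpha>) *\<^sub>R snd (snd z)"
  shows "(streaming_weight \<alpha> p K k has_derivative
          (\<lambda>dz. exp (K * T powr (-k)) *
             (p * (1 + y \<bullet> y) powr (p / 2 - 1) *
                (y \<bullet> (fst (snd dz) - fst dz *\<^sub>R snd (snd z) - T *\<^sub>R snd (snd dz)))
              - K * k * T powr (-k - 1) * (1 + y \<bullet> y) powr (p / 2) * fst dz))) (at z)"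
proof -
  define Y where "Y = (\<lambda>z::real \<times> 'a \<times> 'a. fst (snd z) - (fst z + \<alpha>) *\<^sub>R snd (snd z))"
  define DY where
    "DY = (\<lambda>dz::real \<times> 'a \<times> 'a. fst (snd dz) - fst dz *\<^sub>R snd (snd z) - T *\<^sub>R snd (snd dz))"
  have "(Y has_derivative DY) (at z)"
    unfolding Y_def DY_def T_def
    by (rule derivative_eq_intros refl | simp)+ (simp add: fun_eq_iff algebra_simps)
  moreover have yY: "Y z = y"
    by (simp add: y_def Y_def)
  ultimately have "((\<lambda>z. 1 + Y z \<bullet> Y z) has_derivative (\<lambda>dz. 2 * (y \<bullet> DY dz))) (at z)"
    by (auto intro!: derivative_eq_intros simp: inner_commute)
  from DERIV_compose_FDERIV[OF has_real_derivative_powr this, of "p / 2"]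
  have Q: "((\<lambda>z. (1 + Y z \<bullet> Y z) powr (p / 2)) has_derivative
             (\<lambda>dz. 2 * (y \<bullet> DY dz) * (p / 2 * (1 + y \<bullet> y) powr (p / 2 - 1)))) (at z)"
    by (simp add: y_def Y_def add_pos_nonneg)
  have "((\<lambda>s. K * (s + \<alpha>) powr (-k)) has_real_derivative K * (-k * T powr (-k - 1))) (at (fst z))"
    using T_pos unfolding T_def by (auto intro!: derivative_eq_intros)
  from DERIV_compose_FDERIV
      [OF DERIV_exp[THEN DERIV_chain2, OF this] has_derivative_fst[OF has_derivative_ident]]
  have \<Phi>: "((\<lambda>z. exp (K * (fst z + \<alpha>) powr (-k))) has_derivative
             (\<lambda>dz. fst dz * (exp (K * T powr (-k)) * (K * (-k * T powr (-k - 1)))))) (at z)"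
    by (simp add: T_def)
  have "streaming_weight \<alpha> p K k = (\<lambda>z. (1 + Y z \<bullet> Y z) powr (p / 2) * exp (K * (fst z + \<alpha>) powr (-k)))"
    by (simp add: fun_eq_iff streaming_weight_def Y_def jbr_powr)
  with has_derivative_mult[OF Q \<Phi>] show ?thesis
    by (elim ssubst has_derivative_eq_rhs)
      (simp add: fun_eq_iff yY DY_def T_def[symmetric], simp add: algebra_simps)
qed

lemma field_term_dominated:
  fixes y E :: "'a::real_inner"
  assumes T: "0 < T" and p: "0 \<le> p" and E: "norm E \<le> C * T powr (-k - 2)"
  shows "p * T * (1 + y \<bullet> y) powr (p / 2 - 1) * \<bar>y \<bullet> E\<bar>
           \<le> p * C * T powr (-k - 1) * (1 + y \<bullet> y) powr (p / 2)"
proof -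
  define Q where "Q = 1 + y \<bullet> y"
  have Q: "1 \<le> Q"
    by (simp add: Q_def)
  have "2 * norm y \<le> 1 + (norm y)\<^sup>2"
    using sum_squares_bound[of "norm y" 1] by simp
  then have "norm y \<le> Q"
    unfolding Q_def power2_norm_eq_inner[symmetric] using norm_ge_zero[of y] by linarith
  have "\<bar>y \<bullet> E\<bar> \<le> norm y * norm E"
    by (rule Cauchy_Schwarz_ineq2)
  also have "\<dots> \<le> Q * (C * T powr (-k - 2))"
    using \<open>norm y \<le> Q\<close> E Q by (intro mult_mono) auto
  finally have "\<bar>y \<bullet> E\<bar> \<le> Q * (C * T powr (-k - 2))" .
  then have "p * T * Q powr (p / 2 - 1) * \<bar>y \<bullet> E\<bar>
      \<le> p * T * Q powr (p / 2 - 1) * (Q * (C * T powr (-k - 2)))"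
    using p T by (intro mult_left_mono) auto
  also have "\<dots> = p * C * (T * T powr (-k - 2)) * (Q powr (p / 2 - 1) * Q)"
    by (simp add: ac_simps)
  also have "T * T powr (-k - 2) = T powr (1 + (-k - 2))"
    using T by (intro powr_mult_base) simp
  also have "1 + (-k - 2) = -k - 1"
    by simp
  also have "Q powr (p / 2 - 1) * Q = Q powr (p / 2)"
    using Q by (simp add: powr_diff)
  finally show ?thesis
    unfolding Q_def .
qed

lemma streaming_weight_decreasing_along_flow:
  fixes x v E :: "'a::real_inner"
  assumes T_pos: "0 < t + \<alpha>" and p: "0 \<le> p" and K: "p * C < K * k"
    and E: "norm E \<le> C * (t + \<alpha>) powr (-k - 2)"
  shows "\<exists>P'. (streaming_weight \<alpha> p K k has_derivative P') (at (t, x, v)) \<and> P' (1, v, E) < 0"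
proof -
  define T where "T = t + \<alpha>"
  define y where "y = x - T *\<^sub>R v"
  define Q where "Q = 1 + y \<bullet> y"
  have T: "0 < T"
    using T_pos by (simp add: T_def)
  have "0 < Q"
    by (simp add: Q_def add_pos_nonneg)
  with T have "0 < T powr (-k - 1) * Q powr (p / 2)"
    by simp
  with K have "p * C * T powr (-k - 1) * Q powr (p / 2) < K * k * T powr (-k - 1) * Q powr (p / 2)"
    by (metis mult.assoc mult_strict_right_mono)
  moreover have "0 \<le> p * T * Q powr (p / 2 - 1)"
    using p T by simp
  then have "- (p * T * Q powr (p / 2 - 1) * (y \<bullet> E)) \<le> p * T * Q powr (p / 2 - 1) * \<bar>y \<bullet> E\<bar>"
    using mult_left_mono[OF abs_ge_minus_self] by (metis mult_minus_right)
  moreover have "p * Q powr (p / 2 - 1) * (y \<bullet> (v - 1 *\<^sub>R v - T *\<^sub>R E))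
      = - (p * T * Q powr (p / 2 - 1) * (y \<bullet> E))"
    by (simp add: algebra_simps)
  ultimately have flow_term: "p * Q powr (p / 2 - 1) * (y \<bullet> (v - 1 *\<^sub>R v - T *\<^sub>R E))
      - K * k * T powr (-k - 1) * Q powr (p / 2) * 1 < 0"
    using field_term_dominated[OF T p E[folded T_def], of y, folded Q_def] by linarith
  show ?thesis
    using streaming_weight_has_derivative[of "(t, x, v)" \<alpha> p K k] T_pos
      mult_pos_neg[OF exp_gt_zero flow_term]
    unfolding T_def y_def Q_def by auto
qed

lemma continuous_on_streaming_weight:
  assumes "0 < \<alpha>"
  shows "continuous_on ({0..} \<times> UNIV) (streaming_weight \<alpha> p K k :: real \<times> 'a::real_inner \<times> 'a \<Rightarrow> real)"
proof (rule continuous_at_imp_continuous_on, rule ballI)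
  fix z :: "real \<times> 'a \<times> 'a"
  assume "z \<in> {0..} \<times> UNIV"
  with assms have "0 < fst z + \<alpha>"
    by auto
  from has_derivative_continuous[OF streaming_weight_has_derivative[OF this]]
  show "isCont (streaming_weight \<alpha> p K k) z" .
qed

lemma jbr_powr_le_streaming_weight:
  assumes "0 \<le> K"
  shows "jbr (x - (t + \<alpha>) *\<^sub>R v) powr p \<le> streaming_weight \<alpha> p K k (t, x, v)"
  using assms mult_left_mono[of 1 "exp (K * (t + \<alpha>) powr (-k))" "jbr (x - (t + \<alpha>) *\<^sub>R v) powr p"]
  by (simp add: streaming_weight_def)

lemma classical_solution_transported:
  fixes f :: "real \<Rightarrow> real^'d \<Rightarrow> real^'d \<Rightarrow> real"
  assumes "classical_solution f f0"
  shows classical_solution_continuous: "continuous_on ({0..} \<times> UNIV) (\<lambda>(t, x, v). f t x v)"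
    and classical_solution_transport: "0 < t \<Longrightarrow>
      \<exists>F'. ((\<lambda>(t, x, v). f t x v) has_derivative F') (at (t, x, v)) \<and> F' (1, v, Efield f t x) = 0"
    and classical_solution_initial: "f 0 x v = f0 x v"
    and classical_solution_integrable: "0 \<le> t \<Longrightarrow> integrable lborel (f t x)"
proof -
  obtain Df where Df: "\<forall>z\<in>{0..} \<times> UNIV.
      ((\<lambda>(t, x, v). f t x v) has_derivative blinfun_apply (Df z)) (at z within {0..} \<times> UNIV)"
    and transport: "\<forall>t\<ge>0. \<forall>x v. blinfun_apply (Df (t, x, v)) (1, v, Efield f t x) = 0"
    using conjunct1[OF assms[unfolded classical_solution_def]] by (elim exE conjE)
  show "f 0 x v = f0 x v"
    using assms unfolding classical_solution_def by blast
  show "integrable lborel (f t x)" if "0 \<le> t"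
    using assms that unfolding classical_solution_def by blast
  show "continuous_on ({0..} \<times> UNIV) (\<lambda>(t, x, v). f t x v)"
    unfolding continuous_on_eq_continuous_within
    using Df has_derivative_continuous by blast
  assume t: "0 < t"
  have "((\<lambda>(t, x, v). f t x v) has_derivative blinfun_apply (Df (t, x, v)))
          (at (t, x, v) within {0<..} \<times> UNIV)"
    by (rule has_derivative_subset[OF bspec[OF Df]]) (use t in auto)
  moreover have "at (t, x, v) within {0<..} \<times> UNIV = at (t, x, v)"
    by (rule at_within_open) (use t in \<open>auto intro: open_Times\<close>)
  ultimately show
    "\<exists>F'. ((\<lambda>(t, x, v). f t x v) has_derivative F') (at (t, x, v)) \<and> F' (1, v, Efield f t x) = 0"
    using transport t by auto
qed

lemma norm_Pair_le_affine:
  fixes x v :: "'a::real_normed_vector" and E :: "'b::real_normed_vector"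
  assumes E: "norm E \<le> b"
  shows "norm (v, E) \<le> (1 + b) * (1 + norm (x, v))"
proof -
  have "norm (v, E) \<le> norm (x, v) + b"
    using norm_Pair_le[of v E] norm_snd_le[of v x] E by linarith
  moreover have "0 \<le> b * norm (x, v)"
    using order_trans[OF norm_ge_zero E] by simp
  ultimately show ?thesis
    by (simp add: algebra_simps)
qed

lemma vlasov_weighted_sup_bound:
  fixes f :: "real \<Rightarrow> real^'d \<Rightarrow> real^'d \<Rightarrow> real" and f0 :: "real^'d \<Rightarrow> real^'d \<Rightarrow> real"
  assumes \<alpha>: "0 < \<alpha>" and p: "0 \<le> p" and k: "0 < k"
    and sol: "classical_solution f f0"
    and E_decay: "\<And>t x. 0 \<le> t \<Longrightarrow> norm (Efield f t x) \<le> C * (t + \<alpha>) powr (-k - 2)"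
    and initial: "\<And>x v. \<bar>f0 x v\<bar> * jbr (x - \<alpha> *\<^sub>R v) powr p \<le> M"
  shows "\<exists>A. \<forall>t\<ge>0. \<forall>x v. \<bar>f t x v\<bar> * jbr (x - (t + \<alpha>) *\<^sub>R v) powr p \<le> A"
proof -
  define F :: "real \<times> (real^'d) \<times> (real^'d) \<Rightarrow> real" where "F = (\<lambda>(t, x, v). f t x v)"
  define V :: "real \<Rightarrow> (real^'d) \<times> (real^'d) \<Rightarrow> (real^'d) \<times> (real^'d)"
    where "V = (\<lambda>t (x, v). (v, Efield f t x))"
  have "0 \<le> C * \<alpha> powr (-k - 2)"
    using order_trans[OF norm_ge_zero E_decay[of 0 0]] by simp
  with \<alpha> have C: "0 \<le> C"
    by (simp add: zero_le_mult_iff)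
  define K where "K = (p * C + 1) / k"
  have K: "p * C < K * k" "0 \<le> K"
    using k p C by (simp_all add: K_def)
  define P :: "real \<times> (real^'d) \<times> (real^'d) \<Rightarrow> real" where "P = streaming_weight \<alpha> p K k"
  define B where "B = 1 + C * \<alpha> powr (-k - 2)"
  have V_growth: "norm (V t (x, v)) \<le> B * (1 + norm (x, v))" if "0 < t" for t x v
  proof -
    have "(t + \<alpha>) powr (-k - 2) \<le> \<alpha> powr (-k - 2)"
      using that \<alpha> k by (intro powr_mono2') auto
    then have "norm (Efield f t x) \<le> C * \<alpha> powr (-k - 2)"
      using E_decay[of t x] that mult_left_mono[OF _ C] by fastforce
    from norm_Pair_le_affine[OF this, of v x] show ?thesis
      by (simp add: V_def B_def)
  qed
  have "\<bar>F (t, w)\<bar> * P (t, w) \<le> M * exp (K * \<alpha> powr (-k))" if "0 \<le> t" for t w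
  proof (rule transport_maximum_principle_abs[OF _ _ _ _ _ _ _ that])
    show "continuous_on ({0..} \<times> UNIV) F"
      unfolding F_def by (rule classical_solution_continuous[OF sol])
    show "continuous_on ({0..} \<times> UNIV) P"
      unfolding P_def by (rule continuous_on_streaming_weight[OF \<alpha>])
    show "0 \<le> P (s, y)" for s y
      by (simp add: P_def streaming_weight_def)
    fix s :: real and y :: "(real^'d) \<times> (real^'d)"
    obtain x v where y: "y = (x, v)"
      by fastforce
    show "\<bar>F (0, y)\<bar> * P (0, y) \<le> M * exp (K * \<alpha> powr (-k))"
      using mult_right_mono[OF initial[of x v], of "exp (K * \<alpha> powr (-k))"]
      by (simp add: F_def P_def streaming_weight_def y classical_solution_initial[OF sol] mult.assoc)
    assume s: "0 < s"
    show "\<exists>F'. (F has_derivative F') (at (s, y)) \<and> F' (1, V s y) = 0"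
      using classical_solution_transport[OF sol s] unfolding F_def V_def y by simp
    show "\<exists>P'. (P has_derivative P') (at (s, y)) \<and> P' (1, V s y) < 0"
      using streaming_weight_decreasing_along_flow[OF _ p K(1) E_decay] s \<alpha>
      unfolding P_def V_def y by simp
    show "norm (V s y) \<le> B * (1 + norm y)"
      using V_growth[OF s] by (simp add: y)
  qed
  moreover have "\<bar>f t x v\<bar> * jbr (x - (t + \<alpha>) *\<^sub>R v) powr p \<le> \<bar>F (t, x, v)\<bar> * P (t, x, v)" for t x v
  proof -
    have weight: "jbr (x - (t + \<alpha>) *\<^sub>R v) powr p \<le> P (t, x, v)"
      unfolding P_def by (rule jbr_powr_le_streaming_weight[OF K(2)])
    show ?thesis
      using mult_left_mono[OF weight abs_ge_zero] by (simp add: F_def)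
  qed
  ultimately show ?thesis
    by (meson order_trans)
qed

lemma emeasure_lborel_ball:
  fixes c :: "'a::euclidean_space"
  assumes "0 \<le> r"
  shows "emeasure lborel (ball c r) = ennreal (r ^ DIM('a) * measure lborel (ball (0::'a) 1))"
  using emeasure_lborel_ball_finite[of c r] content_ball_conv_unit_ball[OF assms, of c]
  by (simp add: emeasure_eq_ennreal_measure)

lemma jbr_powr_neg_dyadic_bound:
  fixes y :: "'a::real_normed_vector"
  assumes p: "0 < p"
  shows "\<exists>k. norm y < 2 ^ k \<and> jbr y powr (-p) \<le> 2 powr p * (2 powr (-p)) ^ k"
proof -
  obtain k0 where "norm y < 2 ^ k0"
    using real_arch_pow[of 2 "norm y"] by auto
  define k where "k = (LEAST k. norm y < (2::real) ^ k)"
  have k: "norm y < 2 ^ k"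
    unfolding k_def by (rule LeastI) fact
  have "jbr y powr (-p) \<le> 2 powr p * (2 powr (-p)) ^ k"
  proof (cases k)
    case 0
    have "1 \<le> jbr y powr p"
      using p by (simp add: jbr_def ge_one_powr_ge_zero)
    then have "jbr y powr (-p) \<le> 1"
      by (simp add: powr_minus inverse_le_1_iff)
    also have "1 \<le> 2 powr p"
      using p by (simp add: ge_one_powr_ge_zero)
    finally show ?thesis
      using 0 by simp
  next
    case (Suc j)
    then have "\<not> norm y < 2 ^ j"
      using not_less_Least[of j "\<lambda>k. norm y < (2::real) ^ k"] unfolding k_def by simp
    moreover have "norm y \<le> jbr y"
      unfolding jbr_def by (rule real_le_rsqrt) simp
    ultimately have "jbr y powr (-p) \<le> (2 ^ j) powr (-p)"
      using p by (intro powr_mono2') auto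
    also have "(2 ^ j) powr (-p) = (2 powr (-p)) ^ j"
      by (simp add: powr_power powr_realpow[symmetric] powr_powr mult.commute)
    also have "\<dots> = 2 powr p * (2 powr (-p)) ^ k"
      using Suc by (simp add: powr_minus field_simps)
    finally show ?thesis .
  qed
  with k show ?thesis
    by blast
qed

text \<open>Decomposing into dyadic balls \<open>|c - s v| < 2\<^sup>k\<close>, each of volume \<open>(2\<^sup>k / s)\<^sup>d \<omega>\<close>, turns
  the integral into a geometric series with ratio \<open>2\<^sup>d\<^sup>-\<^sup>p < 1\<close>.\<close>
lemma nn_integral_jbr_powr_neg_le:
  fixes c :: "'a::euclidean_space"
  assumes s: "0 < s" and p: "real DIM('a) < p"
  shows "(\<integral>\<^sup>+v. ennreal (jbr (c - s *\<^sub>R v) powr (-p)) \<partial>lborel)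
     \<le> ennreal (2 powr p * measure lborel (ball (0::'a) 1) / (1 - 2 powr (real DIM('a) - p))
                / s ^ DIM('a))"
proof -
  define \<omega> where "\<omega> = measure lborel (ball (0::'a) 1)"
  define q where "q = 2 powr (real DIM('a) - p)"
  define a where "a = (\<lambda>k::nat. 2 powr p * (2 powr (-p)) ^ k)"
  define Bk where "Bk = (\<lambda>k::nat. ball ((1 / s) *\<^sub>R c) (2 ^ k / s))"
  have "(2::real) powr (real DIM('a) - p) < 2 powr 0"
    using p by (subst powr_less_cancel_iff) auto
  then have q: "0 < q" "q < 1"
    unfolding q_def by auto
  have p0: "0 < p"
    using p by (metis of_nat_0_le_iff order_le_less_trans)
  have mem: "v \<in> Bk k \<longleftrightarrow> norm (c - s *\<^sub>R v) < 2 ^ k" for v k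
  proof -
    have "(1 / s) *\<^sub>R c - v = (1 / s) *\<^sub>R (c - s *\<^sub>R v)"
      using s by (simp add: algebra_simps)
    then have "dist ((1 / s) *\<^sub>R c) v = norm (c - s *\<^sub>R v) / s"
      using s by (simp add: dist_norm)
    then show ?thesis
      unfolding Bk_def using s by (simp add: divide_less_cancel)
  qed
  have dominated:
    "ennreal (jbr (c - s *\<^sub>R v) powr (-p)) \<le> (\<Sum>k. ennreal (a k) * indicator (Bk k) v)" for v
  proof -
    obtain k where k: "norm (c - s *\<^sub>R v) < 2 ^ k" "jbr (c - s *\<^sub>R v) powr (-p) \<le> a k"
      using jbr_powr_neg_dyadic_bound[OF p0] unfolding a_def by blast
    then have "ennreal (jbr (c - s *\<^sub>R v) powr (-p)) \<le> (\<Sum>k'\<in>{k}. ennreal (a k') * indicator (Bk k') v)"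
      using mem by (simp add: ennreal_leI)
    also have "\<dots> \<le> (\<Sum>k. ennreal (a k) * indicator (Bk k) v)"
      by (rule sum_le_suminf) auto
    finally show ?thesis .
  qed
  have volume:
    "ennreal (a k) * emeasure lborel (Bk k) = ennreal (2 powr p * \<omega> / s ^ DIM('a) * q ^ k)" for k
  proof -
    have "(2 powr (-p)) ^ k * (2 ^ k) ^ DIM('a) = q ^ k"
    proof -
      have "2 powr (-p) * 2 ^ DIM('a) = q"
        unfolding q_def by (simp add: powr_realpow[symmetric] powr_add[symmetric])
      then show ?thesis
        by (metis power_mult power_mult_distrib mult.commute)
    qed
    then have "a k * ((2 ^ k / s) ^ DIM('a) * \<omega>) = 2 powr p * \<omega> / s ^ DIM('a) * q ^ k"
      unfolding a_def by (simp add: power_divide field_simps)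
    moreover have "emeasure lborel (Bk k) = ennreal ((2 ^ k / s) ^ DIM('a) * \<omega>)"
      unfolding Bk_def \<omega>_def using s by (intro emeasure_lborel_ball) simp
    ultimately show ?thesis
      unfolding a_def \<omega>_def by (simp add: ennreal_mult'[symmetric])
  qed
  have "(\<integral>\<^sup>+v. ennreal (jbr (c - s *\<^sub>R v) powr (-p)) \<partial>lborel)
      \<le> (\<integral>\<^sup>+v. (\<Sum>k. ennreal (a k) * indicator (Bk k) v) \<partial>lborel)"
    by (rule nn_integral_mono) (rule dominated)
  also have "\<dots> = (\<Sum>k. \<integral>\<^sup>+v. ennreal (a k) * indicator (Bk k) v \<partial>lborel)"
    by (rule nn_integral_suminf)
      (auto intro!: borel_measurable_times_ennreal borel_measurable_indicator simp: Bk_def)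
  also have "\<dots> = (\<Sum>k. ennreal (a k) * emeasure lborel (Bk k))"
    by (simp add: Bk_def nn_integral_cmult_indicator)
  also have "\<dots> = (\<Sum>k. ennreal (2 powr p * \<omega> / s ^ DIM('a) * q ^ k))"
    by (simp only: volume)
  also have "\<dots> = ennreal (2 powr p * \<omega> / s ^ DIM('a) * (1 / (1 - q)))"
    using q s by (intro suminf_ennreal_eq sums_mult geometric_sums) (auto simp: \<omega>_def)
  finally show ?thesis
    by (simp add: q_def \<omega>_def field_simps)
qed

lemma rho_decay_of_weighted_bound:
  fixes f :: "real \<Rightarrow> real^'d \<Rightarrow> real^'d \<Rightarrow> real"
  assumes integrable: "integrable lborel (f t x)" and T: "0 < t + \<alpha>" and p: "real CARD('d) < p"
    and bound: "\<And>v. \<bar>f t x v\<bar> * jbr (x - (t + \<alpha>) *\<^sub>R v) powr p \<le> A"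
  shows "\<bar>rho f t x\<bar> \<le> A * (2 powr p * omega TYPE('d) / (1 - 2 powr (real CARD('d) - p)))
                         * (t + \<alpha>) powr (- real CARD('d))"
proof -
  define s where "s = t + \<alpha>"
  define G where "G = 2 powr p * omega TYPE('d) / (1 - 2 powr (real CARD('d) - p))"
  have "(2::real) powr (real CARD('d) - p) < 2 powr 0"
    using p by (subst powr_less_cancel_iff) auto
  then have G: "0 \<le> G"
    unfolding G_def omega_def by (intro divide_nonneg_pos mult_nonneg_nonneg) auto
  have A: "0 \<le> A"
    using bound[of 0] by (meson abs_ge_zero mult_nonneg_nonneg order_trans powr_ge_zero)
  have pointwise: "ennreal (norm (f t x v)) \<le> ennreal (A * jbr (x - s *\<^sub>R v) powr (-p))" for v
  proof -
    have "0 < 1 + (norm (x - s *\<^sub>R v))\<^sup>2"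
      by (simp add: add_pos_nonneg)
    then have J: "0 < jbr (x - s *\<^sub>R v) powr p"
      by (simp add: jbr_def)
    with bound[of v] have "\<bar>f t x v\<bar> \<le> A / jbr (x - s *\<^sub>R v) powr p"
      unfolding s_def by (simp add: pos_le_divide_eq)
    then show ?thesis
      by (intro ennreal_leI) (simp add: powr_minus divide_inverse)
  qed
  have "ennreal \<bar>rho f t x\<bar> \<le> (\<integral>\<^sup>+v. norm (f t x v) \<partial>lborel)"
    unfolding rho_def using integral_norm_bound_ennreal[OF integrable] by simp
  also have "\<dots> \<le> (\<integral>\<^sup>+v. ennreal (A * jbr (x - s *\<^sub>R v) powr (-p)) \<partial>lborel)"
    by (rule nn_integral_mono) (rule pointwise)
  also have "\<dots> = A * (\<integral>\<^sup>+v. ennreal (jbr (x - s *\<^sub>R v) powr (-p)) \<partial>lborel)"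
    using A by (simp add: ennreal_mult jbr_def nn_integral_cmult)
  also have "\<dots> \<le> A * ennreal (G / s ^ CARD('d))"
    using nn_integral_jbr_powr_neg_le[of s p x] T p unfolding G_def omega_def s_def
    by (auto intro: mult_left_mono)
  finally have "\<bar>rho f t x\<bar> \<le> A * (G / s ^ CARD('d))"
    using A G T by (simp add: s_def ennreal_mult[symmetric] ennreal_le_iff)
  also have "A * (G / s ^ CARD('d)) = A * G * s powr (- real CARD('d))"
    using T by (simp add: s_def powr_minus powr_realpow divide_inverse)
  finally show ?thesis
    unfolding G_def s_def .
qed

lemma Gcal_le_of_weighted_bound:
  fixes f :: "real \<Rightarrow> real^'d \<Rightarrow> real^'d \<Rightarrow> real"
  assumes bound: "\<And>x v. \<bar>f t x v\<bar> * jbr (x - (t + \<alpha>) *\<^sub>R v) powr p \<le> A"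
  shows "bdd_above (Gweight f \<alpha> p t) \<and> Gcal f \<alpha> p t \<le> 1 + A"
proof -
  have le: "w \<le> A" if w_in: "w \<in> Gweight f \<alpha> p t" for w
  proof -
    obtain x v where w: "w = jbr x powr p * gfun f \<alpha> t x v"
      using w_in unfolding Gweight_def by auto
    have "w \<le> \<bar>f t (x + (t + \<alpha>) *\<^sub>R v) v\<bar> * jbr ((x + (t + \<alpha>) *\<^sub>R v) - (t + \<alpha>) *\<^sub>R v) powr p"
      unfolding w gfun_def by (simp add: mult.commute mult_left_mono)
    also have "\<dots> \<le> A"
      by (rule bound)
    finally show ?thesis .
  qed
  then have "Sup (Gweight f \<alpha> p t) \<le> A"
    by (intro cSup_least) (auto simp: Gweight_def)
  with le show ?thesis
    unfolding Gcal_def bdd_above_def by auto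
qed

lemma W1inf_bounded:
  assumes "W1inf h"
  shows "\<exists>M. \<forall>z. \<bar>h z\<bar> \<le> M"
proof -
  obtain M where "\<forall>y \<in> range h. norm y \<le> M"
    using assms unfolding W1inf_def bounded_iff by blast
  then show ?thesis
    by auto
qed

theorem lemma3p1:
  fixes f :: "real \<Rightarrow> real^'d \<Rightarrow> real^'d \<Rightarrow> real"
    and f0 :: "real^'d \<Rightarrow> real^'d \<Rightarrow> real"
    and \<alpha> p :: real and n :: nat
  assumes d4: "CARD('d) \<ge> 4"
    and alpha_pos: "\<alpha> > 0"
    and f0_C10: "C1_0 (\<lambda>(x,v). f0 x v)"
    and f0_nonneg: "\<forall>x v. f0 x v \<ge> 0"
    and p_gt: "p > real CARD('d) + 1"
    and f0_weighted: "W1inf (\<lambda>(x,v). jbr (x - \<alpha> *\<^sub>R v) powr p * f0 x v)"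
    and sol: "classical_solution f f0"
    and E_decay: "\<exists>C. \<forall>t\<ge>0. \<forall>x. norm (Efield f t x) \<le> C * (t + \<alpha>) powr (1 - real CARD('d))"
    and n_gt: "n > CARD('d) * (CARD('d) - 1)"
    and moments: "\<forall>k\<le>n. \<exists>C. \<forall>t\<ge>0. Mom f \<alpha> k t \<le> C"
  shows "(\<exists>C. \<forall>t\<ge>0. bdd_above (Gweight f \<alpha> p t) \<and> Gcal f \<alpha> p t \<le> C) \<and>
         (\<exists>C. \<forall>t\<ge>0. \<forall>x. \<bar>rho f t x\<bar> \<le> C * (t + \<alpha>) powr (- real CARD('d)))"
proof -
  have p: "0 \<le> p" "real CARD('d) < p"
    using p_gt by linarith+
  obtain M where M_bound: "\<forall>z. \<bar>(\<lambda>(x, v). jbr (x - \<alpha> *\<^sub>R v) powr p * f0 x v) z\<bar> \<le> M"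
    using W1inf_bounded[OF f0_weighted] by blast
  have M: "\<bar>f0 x v\<bar> * jbr (x - \<alpha> *\<^sub>R v) powr p \<le> M" for x v
    using spec[OF M_bound, of "(x, v)"] by (simp add: abs_mult mult.commute)
  obtain C where C: "\<forall>t\<ge>0. \<forall>x. norm (Efield f t x) \<le> C * (t + \<alpha>) powr (1 - real CARD('d))"
    using E_decay by blast
  have "1 - real CARD('d) = - (real CARD('d) - 3) - 2" and "0 < real CARD('d) - 3"
    using d4 by simp_all
  with C obtain A where A: "\<And>t x v. 0 \<le> t \<Longrightarrow> \<bar>f t x v\<bar> * jbr (x - (t + \<alpha>) *\<^sub>R v) powr p \<le> A"
    using vlasov_weighted_sup_bound[OF alpha_pos p(1) _ sol _ M] by metis
  have "bdd_above (Gweight f \<alpha> p t) \<and> Gcal f \<alpha> p t \<le> 1 + A" if "0 \<le> t" for t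
    using A[OF that] by (rule Gcal_le_of_weighted_bound)
  moreover have "\<bar>rho f t x\<bar> \<le> A * (2 powr p * omega TYPE('d) / (1 - 2 powr (real CARD('d) - p)))
                                 * (t + \<alpha>) powr (- real CARD('d))" if "0 \<le> t" for t x
    using classical_solution_integrable[OF sol that] that alpha_pos p(2) A
    by (intro rho_decay_of_weighted_bound) auto
  ultimately show ?thesis
    by blast
qed

end
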